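(* Let $d\geq 1$ and let $\mathcal{W}_d=\{(\lambda_1,\dots,\lambda_d)\in\mathbb{Z}^d : \lambda_1>\dots>\lambda_d\}$, viewed as a graph in which two vertices are adjacent iff they are at Euclidean distance $1$, with rank $r(\lambda)=\sum_{i=1}^d\lambda_i-\binom{d+1}{2}$. Let $\mu,\lambda\in\mathcal{W}_d$ with $r(\mu)\leq r(\lambda)$, and let $W_0,W_1,W_2,\dots$ be any sequence of words in the two letters $L,R$ such that $W_n$ contains exactly $n$ letters $L$ and exactly $n+r(\lambda)-r(\mu)$ letters $R$. Then $$\sum_{n\geq 0} Z_d(W_n;\mu,\lambda)\frac{x^{2n+r(\lambda)-r(\mu)}}{n!\,(n+r(\lambda)-r(\mu))!}=\det\big(I_{\lambda_i-\mu_j}(2x)\big)_{1\leq i,j\leq d}.$$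
   Context: For a word $W=L^{b_k}R^{a_k}\cdots L^{b_1}R^{a_1}$, $Z_d(W;\mu,\lambda)$ is the number of walks in the graph $\mathcal{W}_d$ from $\mu$ to $\lambda$ that consist of $a_1$ rank-increasing steps, then $b_1$ rank-decreasing steps, then $a_2$ rank-increasing steps, then $b_2$ rank-decreasing steps, and so on, ending with $b_k$ rank-decreasing steps (a step goes between adjacent vertices and changes the rank by $+1$ or $-1$). $I_k$ denotes the modified Bessel function of integer order $k$: for $k\geq 0$, $I_k(2x)=\sum_{n\geq 0}\frac{x^{2n+k}}{n!\,(n+k)!}$, and $I_{-k}=I_k$. *)

theory Defs
  imports Complex_Main "Jordan_Normal_Form.Determinant"
begin

definition inW :: "nat \<Rightarrow> int list \<Rightarrow> bool" where
  "inW d v \<longleftrightarrow> length v = d \<and> sorted_wrt (>) v"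

definition adjW :: "int list \<Rightarrow> int list \<Rightarrow> bool" where
  "adjW u v \<longleftrightarrow> length u = length v \<and> (\<Sum>i<length u. (u!i - v!i)^2) = 1"

definition rankW :: "nat \<Rightarrow> int list \<Rightarrow> int" where
  "rankW d v = sum_list v - int ((d + 1) choose 2)"

datatype letter = L | R

text \<open>A word is written as a list of letters, left to right as on paper.
  It is read from right to left: the last letter gives the first step.
  Letter R = rank-increasing step, L = rank-decreasing step.\<close>
definition walksW :: "nat \<Rightarrow> letter list \<Rightarrow> int list \<Rightarrow> int list \<Rightarrow> int list list set" where
  "walksW d w mu la = {ps. length ps = length w + 1 \<and> ps ! 0 = mu \<and> ps ! length w = la \<and>
      (\<forall>j\<le>length w. inW d (ps ! j)) \<and>
      (\<forall>j<length w. adjW (ps ! j) (ps ! Suc j) \<and>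
         rankW d (ps ! Suc j) = rankW d (ps ! j) + (if w ! (length w - 1 - j) = R then 1 else -1))}"

definition Z :: "nat \<Rightarrow> letter list \<Rightarrow> int list \<Rightarrow> int list \<Rightarrow> nat" where
  "Z d w mu la = card (walksW d w mu la)"

definition besselI :: "int \<Rightarrow> real \<Rightarrow> real" where
  "besselI k y = (\<Sum>n. (y/2)^(2*n + nat \<bar>k\<bar>) / (fact n * fact (n + nat \<bar>k\<bar>)))"

end

theory Submission
  imports
    Defs
    "HOL-Computational_Algebra.Formal_Power_Series"
    "HOL-Combinatorics.Multiset_Permutations"
begin

text \<open>Unconstrained walks in \<open>\<int>\<^sup>d\<close> whose steps move one coordinate by \<open>\<plusminus>1\<close>, with
  the signs prescribed by the word, satisfy the same recursion in the word as walks in \<open>\<W>\<^sub>d\<close>,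
  except that they may step onto a wall \<open>\<lambda>\<^sub>a = \<lambda>\<^sub>b\<close>; the alternating sum over permutations
  \<open>p\<close> of such walks from \<open>\<mu>\<^sub>p\<close> vanishes on the walls, so it counts walks in \<open>\<W>\<^sub>d\<close>
  (reflection principle). The number of unconstrained walks does not depend on the order of the
  letters, hence it is the number of all \<open>\<plusminus>1\<close> walks of the same length divided by the number
  of rearrangements of the word, a binomial coefficient. The exponential generating function of
  all such walks to \<open>v\<close> factorises over the coordinates, each factor being
  \<open>\<Sum>\<^sub>n x\<^bsup>2n+|c|\<^esup>/(n! (n+|c|)!) = I\<^sub>c(2x)\<close>, and the alternating sum over \<open>p\<close>
  becomes the determinant.\<close>

(* Jordan_Normal_Form's vector indexing and fps_nth share the syntax $. *)
no_notation vec_index (infixl \<open>$\<close> 100)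
notation fps_nth (infixl \<open>$\<close> 75)

lemma UNIV_letter: "(UNIV :: letter set) = {L, R}"
  using letter.exhaust by auto

instance letter :: finite
  by standard (simp add: UNIV_letter)

definition letter_step :: "letter \<Rightarrow> int" where
  "letter_step s = (if s = R then 1 else -1)"

lemma abs_letter_step: "\<bar>letter_step s\<bar> = 1"
  by (simp add: letter_step_def)

lemma count_list_L_plus_R: "count_list w L + count_list w R = length w"
proof (induction w)
  case (Cons s w)
  then show ?case by (cases s) auto
qed simp

lemma count_list_replicate_same: "count_list (replicate n x) x = n"
  by (induction n) auto

lemma sum_fun_upd_add:
  fixes f :: "'a \<Rightarrow> 'b::ab_group_add"
  assumes "finite A" "i \<in> A"
  shows "sum (f(i := f i + c)) A = sum f A + c"
proof -
  have "sum (f(i := f i + c)) A = f i + c + sum (f(i := f i + c)) (A - {i})"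
    using assms by (simp add: sum.remove)
  also have "sum (f(i := f i + c)) (A - {i}) = sum f (A - {i})"
    by (rule sum.cong) auto
  finally show ?thesis
    using assms by (simp add: sum.remove algebra_simps)
qed

subsection \<open>Walks in \<open>\<int>\<^sup>d\<close> with prescribed step signs\<close>

text \<open>Walks from the origin to \<open>v\<close> by steps \<open>\<plusminus>e\<^sub>i\<close> whose signs are given by the word;
  as in \<open>walksW\<close>, the first letter gives the last step.\<close>
fun word_walks :: "nat \<Rightarrow> letter list \<Rightarrow> (nat \<Rightarrow> int) \<Rightarrow> nat" where
  "word_walks d [] v = (if \<forall>i<d. v i = 0 then 1 else 0)"
| "word_walks d (s # w) v = (\<Sum>i<d. word_walks d w (v(i := v i - letter_step s)))"

lemma word_walks_permute_coordinates:
  assumes "\<tau> permutes {..<d}"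
  shows "word_walks d w (v \<circ> \<tau>) = word_walks d w v"
proof (induction w arbitrary: v)
  case Nil
  have "(\<forall>i<d. v (\<tau> i) = 0) \<longleftrightarrow> (\<forall>i<d. v i = 0)"
    using assms by (metis lessThan_iff permutes_inverses(1) permutes_in_image)
  then show ?case by simp
next
  case (Cons s w)
  have upd: "(v(\<tau> i := v (\<tau> i) - letter_step s)) \<circ> \<tau> = (v \<circ> \<tau>)(i := v (\<tau> i) - letter_step s)" for i
    using permutes_inj[OF assms] by (auto simp: fun_eq_iff inj_eq)
  have "word_walks d (s # w) (v \<circ> \<tau>) =
      (\<Sum>i<d. word_walks d w ((v(\<tau> i := v (\<tau> i) - letter_step s)) \<circ> \<tau>))"
    by (simp only: word_walks.simps upd o_apply)
  also have "\<dots> = (\<Sum>i<d. word_walks d w (v(\<tau> i := v (\<tau> i) - letter_step s)))"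
    by (simp only: Cons.IH)
  also have "\<dots> = word_walks d (s # w) v"
    using sum.permute[OF assms, of "\<lambda>i. word_walks d w (v(i := v i - letter_step s))"]
    by (simp add: o_def)
  finally show ?case .
qed

lemma word_walks_swap: "word_walks d (a # b # w) v = word_walks d (b # a # w) v"
proof -
  let ?move = "\<lambda>s u i. u(i := u i - letter_step s)"
  have "word_walks d (a # b # w) v = (\<Sum>i<d. \<Sum>j<d. word_walks d w (?move b (?move a v i) j))"
    by simp
  also have "\<dots> = (\<Sum>j<d. \<Sum>i<d. word_walks d w (?move a (?move b v j) i))"
    by (subst sum.swap) (intro sum.cong refl arg_cong[where f="word_walks d w"], auto simp: fun_eq_iff)
  also have "\<dots> = word_walks d (b # a # w) v" by simp
  finally show ?thesis .
qed

lemma word_walks_append_Cons: "word_walks d (xs @ a # ys) v = word_walks d (a # xs @ ys) v"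
proof (induction xs arbitrary: v)
  case (Cons x xs)
  then have "word_walks d (x # xs @ a # ys) v = word_walks d (x # a # xs @ ys) v" by simp
  then show ?case by (simp only: append_Cons word_walks_swap)
qed simp

lemma word_walks_mset_eq: "mset w = mset w' \<Longrightarrow> word_walks d w v = word_walks d w' v"
proof (induction w arbitrary: w' v)
  case (Cons a w)
  then obtain xs ys where w': "w' = xs @ a # ys"
    by (metis list.set_intros(1) set_mset_mset split_list)
  with Cons.prems have "mset w = mset (xs @ ys)" by simp
  then have "word_walks d w u = word_walks d (xs @ ys) u" for u
    by (rule Cons.IH)
  then have "word_walks d (a # w) v = word_walks d (a # xs @ ys) v" by simp
  then show ?case by (simp add: w' word_walks_append_Cons)
qed simp

lemma word_walks_nonzero_imp_sum:
  "word_walks d w v \<noteq> 0 \<Longrightarrow> (\<Sum>i<d. v i) = int (count_list w R) - int (count_list w L)"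
proof (induction w arbitrary: v)
  case (Cons s w)
  then obtain i where i: "i < d" "word_walks d w (v(i := v i - letter_step s)) \<noteq> 0"
    by (auto elim: sum.not_neutral_contains_not_neutral)
  from Cons.IH[OF i(2)] sum_fun_upd_add[of "{..<d}" i v "- letter_step s"] i(1) show ?case
    by (cases s) (auto simp: letter_step_def)
qed (simp split: if_splits)

lemma word_walks_one_dim:
  "word_walks 1 w v = (if v 0 = int (count_list w R) - int (count_list w L) then 1 else 0)"
proof (induction w arbitrary: v)
  case (Cons s w)
  then show ?case by (cases s) (auto simp: letter_step_def)
qed simp

fun walks_of_length :: "nat \<Rightarrow> nat \<Rightarrow> (nat \<Rightarrow> int) \<Rightarrow> nat" where
  "walks_of_length d 0 v = (if \<forall>i<d. v i = 0 then 1 else 0)"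
| "walks_of_length d (Suc N) v =
     (\<Sum>i<d. walks_of_length d N (v(i := v i - 1)) + walks_of_length d N (v(i := v i + 1)))"

lemma walks_of_length_cong:
  "(\<And>i. i < d \<Longrightarrow> v i = v' i) \<Longrightarrow> walks_of_length d N v = walks_of_length d N v'"
proof (induction N arbitrary: v v')
  case (Suc N)
  show ?case
    by (simp only: walks_of_length.simps, intro sum.cong refl arg_cong2[where f="(+)"] Suc.IH)
      (auto simp: Suc.prems)
qed simp

lemma walks_of_length_le: "walks_of_length d N v \<le> (2 * d) ^ N"
proof (induction N arbitrary: v)
  case (Suc N)
  have "walks_of_length d (Suc N) v \<le> (\<Sum>i<d. 2 * (2 * d) ^ N)"
    unfolding walks_of_length.simps using Suc.IH by (intro sum_mono) (simp add: mult_2 add_mono)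
  then show ?case by simp
qed simp

lemma finite_words_of_length: "finite {w :: letter list. length w = N}"
  using finite_lists_length_eq[of "UNIV :: letter set" N] by simp

lemma words_length_Suc: "{w :: letter list. length w = Suc N} = (\<Union>s. Cons s ` {w. length w = N})"
  by (auto simp: length_Suc_conv)

lemma walks_of_length_eq_sum_word_walks:
  "walks_of_length d N v = (\<Sum>w | length w = N. word_walks d w v)"
proof (induction N arbitrary: v)
  case (Suc N)
  have "(\<Sum>w | length w = Suc N. word_walks d w v)
      = (\<Sum>s\<in>UNIV. \<Sum>u | length u = N. word_walks d (s # u) v)"
    unfolding words_length_Suc
    by (subst sum.UNION_disjoint) (auto simp: finite_words_of_length sum.reindex)
  also have "\<dots> = (\<Sum>s\<in>UNIV. \<Sum>i<d. walks_of_length d N (v(i := v i - letter_step s)))"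
    unfolding word_walks.simps Suc.IH by (subst sum.swap) (rule refl)
  also have "\<dots> = walks_of_length d (Suc N) v"
    by (simp add: UNIV_letter letter_step_def sum.distrib add.commute)
  finally show ?case ..
qed simp

lemma fact_count_list_mult_card_permutations:
  "fact (count_list w L) * fact (count_list w R) * card (permutations_of_multiset (mset w))
    = fact (length w)"
proof -
  have "(\<Prod>x\<in>set_mset (mset w). fact (count (mset w) x)) = (\<Prod>x\<in>UNIV. fact (count_list w x) :: nat)"
    by (rule prod.mono_neutral_cong_left) (auto simp: count_mset count_list_0_iff)
  also have "\<dots> = fact (count_list w L) * fact (count_list w R)"
    by (simp add: UNIV_letter)
  finally show ?thesis
    using card_permutations_of_multiset_aux[of "mset w"] by (simp add: mult.commute)
qed

lemma letter_words_mset_eqI: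
  assumes "length w = length w'"
    and "int (count_list w R) - int (count_list w L) = int (count_list w' R) - int (count_list w' L)"
  shows "mset w = mset w'"
proof (rule multiset_eqI)
  fix s
  show "count (mset w) s = count (mset w') s"
    using assms count_list_L_plus_R[of w] count_list_L_plus_R[of w'] by (cases s) (auto simp: count_mset)
qed

lemma walks_of_length_eq_word_walks:
  assumes "(\<Sum>i<d. v i) = int (count_list W R) - int (count_list W L)"
  shows "fact (count_list W L) * fact (count_list W R) * walks_of_length d (length W) v
           = fact (length W) * word_walks d W v"
proof -
  have "walks_of_length d (length W) v = (\<Sum>w\<in>permutations_of_multiset (mset W). word_walks d w v)"
    unfolding walks_of_length_eq_sum_word_walks
  proof (rule sum.mono_neutral_right)
    show "permutations_of_multiset (mset W) \<subseteq> {w. length w = length W}"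
      by (auto dest!: permutations_of_multisetD mset_eq_length)
    show "\<forall>w\<in>{w. length w = length W} - permutations_of_multiset (mset W). word_walks d w v = 0"
    proof (rule ballI, rule ccontr)
      fix w assume w: "w \<in> {w. length w = length W} - permutations_of_multiset (mset W)"
        and "word_walks d w v \<noteq> 0"
      then have "mset w = mset W"
        using assms word_walks_nonzero_imp_sum by (intro letter_words_mset_eqI) auto
      with w show False by (auto intro: permutations_of_multisetI)
    qed
  qed (rule finite_words_of_length)
  also have "\<dots> = (\<Sum>w\<in>permutations_of_multiset (mset W). word_walks d W v)"
    by (intro sum.cong refl word_walks_mset_eq) (rule permutations_of_multisetD)
  also have "\<dots> = card (permutations_of_multiset (mset W)) * word_walks d W v"
    by simp
  finally show ?thesis
    by (simp flip: fact_count_list_mult_card_permutations)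
qed

lemma walks_of_length_eq_0:
  assumes "N \<notin> range (\<lambda>n. 2 * n + nat \<bar>\<Sum>i<d. v i\<bar>)"
  shows "walks_of_length d N v = 0"
proof (rule ccontr)
  assume "walks_of_length d N v \<noteq> 0"
  then obtain w where "w \<in> {w. length w = N}" "word_walks d w v \<noteq> 0"
    unfolding walks_of_length_eq_sum_word_walks by (rule sum.not_neutral_contains_not_neutral)
  then have "(\<Sum>i<d. v i) = int (count_list w R) - int (count_list w L)"
    and "N = count_list w L + count_list w R"
    using word_walks_nonzero_imp_sum count_list_L_plus_R[of w] by auto
  then have "N = 2 * min (count_list w L) (count_list w R) + nat \<bar>\<Sum>i<d. v i\<bar>"
    by linarith
  with assms show False by blast
qed

subsection \<open>Exponential generating functions\<close>

definition walk_egf :: "nat \<Rightarrow> (nat \<Rightarrow> int) \<Rightarrow> real fps" where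
  "walk_egf d v = Abs_fps (\<lambda>N. walks_of_length d N v / fact N)"

lemma walk_egf_nth_0: "walk_egf d v $ 0 = (if \<forall>i<d. v i = 0 then 1 else 0)"
  by (simp add: walk_egf_def)

lemma walk_egf_cong: "(\<And>i. i < d \<Longrightarrow> v i = v' i) \<Longrightarrow> walk_egf d v = walk_egf d v'"
  unfolding walk_egf_def by (metis walks_of_length_cong)

lemma fps_deriv_walk_egf:
  "fps_deriv (walk_egf d v) = (\<Sum>i<d. walk_egf d (v(i := v i - 1)) + walk_egf d (v(i := v i + 1)))"
proof (rule fps_ext)
  fix n
  have "fps_deriv (walk_egf d v) $ n = walks_of_length d (Suc n) v / fact n"
    by (simp add: walk_egf_def del: walks_of_length.simps of_nat_Suc)
  then show "fps_deriv (walk_egf d v) $ n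
      = (\<Sum>i<d. walk_egf d (v(i := v i - 1)) + walk_egf d (v(i := v i + 1))) $ n"
    by (simp add: walk_egf_def fps_sum_nth add_divide_distrib sum_divide_distrib)
qed

lemma walk_egf_zero_dim: "walk_egf 0 v = 1"
  by (rule fps_ext) (auto simp: walk_egf_def gr0_conv_Suc)

lemma walk_system_unique:
  fixes F G :: "(nat \<Rightarrow> int) \<Rightarrow> 'a::field_char_0 fps"
  assumes "\<And>v. F v $ 0 = G v $ 0"
    and "\<And>v. fps_deriv (F v) = (\<Sum>i<d. F (v(i := v i - 1)) + F (v(i := v i + 1)))"
    and "\<And>v. fps_deriv (G v) = (\<Sum>i<d. G (v(i := v i - 1)) + G (v(i := v i + 1)))"
  shows "F = G"
proof -
  have "F v $ n = G v $ n" for v n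
  proof (induction n arbitrary: v)
    case (Suc n)
    have "of_nat (Suc n) * F v $ Suc n = fps_deriv (F v) $ n" by simp
    also have "\<dots> = fps_deriv (G v) $ n" by (simp only: assms(2,3) fps_sum_nth fps_add_nth Suc.IH)
    also have "\<dots> = of_nat (Suc n) * G v $ Suc n" by simp
    finally show ?case by (simp del: of_nat_Suc)
  qed (rule assms(1))
  then show ?thesis by (auto intro: fps_ext)
qed

definition bessel_fps :: "int \<Rightarrow> real fps" where
  "bessel_fps c = walk_egf 1 (\<lambda>_. c)"

lemma fps_deriv_bessel_fps: "fps_deriv (bessel_fps c) = bessel_fps (c - 1) + bessel_fps (c + 1)"
proof -
  have "walk_egf 1 ((\<lambda>_. c)(0 := c')) = walk_egf 1 (\<lambda>_. c')" for c'
    by (rule walk_egf_cong) simp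
  then show ?thesis by (simp add: bessel_fps_def fps_deriv_walk_egf)
qed

lemma walk_egf_Suc: "walk_egf (Suc d) v = walk_egf d v * bessel_fps (v d)"
proof -
  let ?G = "\<lambda>v. walk_egf d v * bessel_fps (v d)"
  have "walk_egf (Suc d) = ?G"
  proof (rule walk_system_unique)
    show "walk_egf (Suc d) v $ 0 = ?G v $ 0" for v
      by (auto simp: walk_egf_nth_0 bessel_fps_def less_Suc_eq)
    show "fps_deriv (walk_egf (Suc d) v)
        = (\<Sum>i<Suc d. walk_egf (Suc d) (v(i := v i - 1)) + walk_egf (Suc d) (v(i := v i + 1)))" for v
      by (rule fps_deriv_walk_egf)
    show "fps_deriv (?G v) = (\<Sum>i<Suc d. ?G (v(i := v i - 1)) + ?G (v(i := v i + 1)))" for v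
    proof -
      have "walk_egf d (v(d := c)) = walk_egf d v" for c
        by (rule walk_egf_cong) simp
      moreover have "(\<Sum>i<d. ?G (v(i := v i - 1)) + ?G (v(i := v i + 1)))
          = (\<Sum>i<d. walk_egf d (v(i := v i - 1)) + walk_egf d (v(i := v i + 1))) * bessel_fps (v d)"
        by (auto simp: sum_distrib_right distrib_right intro!: sum.cong)
      ultimately show ?thesis
        by (simp add: fps_deriv_walk_egf fps_deriv_bessel_fps algebra_simps)
    qed
  qed
  then show ?thesis by simp
qed

lemma walk_egf_nth_word:
  assumes "(\<Sum>i<d. v i) = int (count_list W R) - int (count_list W L)"
  shows "walk_egf d v $ length W = word_walks d W v / (fact (count_list W L) * fact (count_list W R))"
proof -
  have "real (fact (count_list W L) * fact (count_list W R) * walks_of_length d (length W) v)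
      = real (fact (length W) * word_walks d W v)"
    by (simp only: walks_of_length_eq_word_walks[OF assms])
  then show ?thesis
    by (simp add: walk_egf_def field_simps)
qed

lemma walk_egf_nth_eq_0:
  "N \<notin> range (\<lambda>n. 2 * n + nat \<bar>\<Sum>i<d. v i\<bar>) \<Longrightarrow> walk_egf d v $ N = 0"
  by (simp add: walk_egf_def walks_of_length_eq_0)

lemma bessel_fps_nth: "bessel_fps (int b - int a) $ (a + b) = 1 / (fact a * fact b)"
proof -
  define W where "W = replicate a L @ replicate b R"
  have counts: "count_list W L = a" "count_list W R = b"
    by (simp_all add: W_def count_list_replicate_same count_list_0_iff)
  then have "word_walks 1 W (\<lambda>_. int b - int a) = 1"
    by (subst word_walks_one_dim) simp
  moreover have "length W = a + b"
    by (simp add: W_def)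
  ultimately show ?thesis
    using walk_egf_nth_word[where d=1 and v="\<lambda>_. int b - int a" and W=W] counts
    by (simp add: bessel_fps_def)
qed

lemma walk_egf_abs_summable: "summable (\<lambda>N. norm (walk_egf d v $ N * x ^ N))"
proof (rule summable_comparison_test)
  show "summable (\<lambda>N. inverse (fact N) * (2 * d * \<bar>x\<bar>) ^ N)"
    by (rule summable_exp)
  have "walk_egf d v $ N * \<bar>x\<bar> ^ N \<le> inverse (fact N) * (2 * d * \<bar>x\<bar>) ^ N" for N
  proof -
    have "real (walks_of_length d N v) \<le> (2 * d) ^ N"
      using walks_of_length_le[of d N v] by (metis of_nat_le_iff of_nat_numeral of_nat_mult of_nat_power)
    then have "real (walks_of_length d N v) * \<bar>x\<bar> ^ N \<le> (2 * d) ^ N * \<bar>x\<bar> ^ N"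
      by (rule mult_right_mono) simp
    then show ?thesis
      by (simp add: walk_egf_def divide_inverse power_mult_distrib mult_ac)
  qed
  then show "\<exists>M. \<forall>N\<ge>M. norm (norm (walk_egf d v $ N * x ^ N)) \<le> inverse (fact N) * (2 * d * \<bar>x\<bar>) ^ N"
    by (auto simp: abs_mult power_abs walk_egf_def)
qed

lemma fps_mult_sums:
  fixes F G :: "'a::{real_normed_field,banach} fps"
  assumes "summable (\<lambda>n. norm (F $ n * x ^ n))" and "summable (\<lambda>n. norm (G $ n * x ^ n))"
  shows "(\<lambda>n. (F * G) $ n * x ^ n) sums ((\<Sum>n. F $ n * x ^ n) * (\<Sum>n. G $ n * x ^ n))"
proof -
  have "(F * G) $ n * x ^ n = (\<Sum>i\<le>n. F $ i * x ^ i * (G $ (n - i) * x ^ (n - i)))" for n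
    unfolding fps_mult_nth atLeast0AtMost sum_distrib_right
    by (intro sum.cong refl) (simp add: mult_ac flip: power_add)
  then show ?thesis
    using Cauchy_product_sums[OF assms] by simp
qed

lemma bessel_fps_sums: "(\<lambda>N. bessel_fps c $ N * x ^ N) sums besselI c (2 * x)"
proof -
  define k where "k = nat \<bar>c\<bar>"
  let ?f = "\<lambda>N. bessel_fps c $ N * x ^ N"
  have zero: "?f N = 0" if "N \<notin> range (\<lambda>n. 2 * n + k)" for N
    using that walk_egf_nth_eq_0[where d=1 and v="\<lambda>_. c"] by (simp add: bessel_fps_def k_def)
  have "?f (2 * n + k) = (2 * x / 2) ^ (2 * n + k) / (fact n * fact (n + k))" for n
  proof (cases "c \<ge> 0")
    case True
    then have "c = int (n + k) - int n" "2 * n + k = n + (n + k)"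
      by (simp_all add: k_def)
    then show ?thesis by (simp only: bessel_fps_nth) simp
  next
    case False
    then have "c = int n - int (n + k)" "2 * n + k = (n + k) + n"
      by (simp_all add: k_def)
    then show ?thesis by (simp only: bessel_fps_nth) (simp add: mult.commute)
  qed
  moreover have "?f sums (\<Sum>N. ?f N)"
    using walk_egf_abs_summable[where d=1 and v="\<lambda>_. c" and x=x]
    by (simp add: bessel_fps_def summable_norm_cancel summable_sums)
  ultimately have "(\<lambda>n. (2 * x / 2) ^ (2 * n + k) / (fact n * fact (n + k))) sums (\<Sum>N. ?f N)"
    using sums_mono_reindex[of "\<lambda>n. 2 * n + k" ?f] zero by (simp add: strict_mono_def)
  then show ?thesis
    using \<open>?f sums (\<Sum>N. ?f N)\<close> by (simp add: besselI_def k_def sums_iff)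
qed

lemma walk_egf_sums: "(\<lambda>N. walk_egf d v $ N * x ^ N) sums (\<Prod>i<d. besselI (v i) (2 * x))"
proof (induction d)
  case 0
  have "(\<lambda>N. (1 :: real fps) $ N * x ^ N) = (\<lambda>N. if N = 0 then 1 else 0)"
    by auto
  then show ?case
    using sums_single[of 0 "\<lambda>_. 1 :: real"] by (simp add: walk_egf_zero_dim)
next
  case (Suc d)
  have "(\<lambda>N. (walk_egf d v * bessel_fps (v d)) $ N * x ^ N) sums
      ((\<Sum>N. walk_egf d v $ N * x ^ N) * (\<Sum>N. bessel_fps (v d) $ N * x ^ N))"
    using walk_egf_abs_summable[where d=1 and v="\<lambda>_. v d" and x=x]
    by (intro fps_mult_sums walk_egf_abs_summable) (simp add: bessel_fps_def)
  with Suc.IH bessel_fps_sums show ?case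
    by (simp add: walk_egf_Suc sums_iff)
qed

subsection \<open>Walks in the Weyl chamber\<close>

lemma sum_list_list_update:
  fixes xs :: "'a::ab_group_add list"
  shows "i < length xs \<Longrightarrow> sum_list (xs[i := x]) = sum_list xs - xs ! i + x"
  by (induction xs arbitrary: i) (auto split: nat.split)

lemma adjW_list_update:
  assumes "i < length v" and "\<bar>c\<bar> = 1"
  shows "adjW (v[i := v ! i - c]) v"
proof -
  have "(\<Sum>j<length v. (v[i := v ! i - c] ! j - v ! j)^2) = (\<Sum>j<length v. if j = i then 1 else 0)"
    using assms by (intro sum.cong refl) (auto simp: nth_list_update abs_square_eq_1)
  with assms(1) show ?thesis
    by (simp add: adjW_def)
qed

lemma adjW_imp_list_update:
  assumes len: "length u = length v" and adj: "adjW u v" and sum: "sum_list v = sum_list u + c"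
  shows "\<exists>i<length v. u = v[i := v ! i - c]"
proof -
  define f where "f j = u ! j - v ! j" for j
  have squares: "(\<Sum>j<length v. (f j)^2) = 1"
    using adj len by (simp add: adjW_def f_def)
  then obtain i where i: "i < length v" "f i \<noteq> 0"
    by (metis (mono_tags, lifting) lessThan_iff power_zero_numeral sum.neutral zero_neq_one)
  have "(f i)^2 \<ge> 1"
    using i(2) by (simp add: int_one_le_iff_zero_less)
  moreover have "(\<Sum>j<length v. (f j)^2) = (f i)^2 + (\<Sum>j\<in>{..<length v} - {i}. (f j)^2)"
    using i(1) by (simp add: sum.remove)
  moreover have "(\<Sum>j\<in>{..<length v} - {i}. (f j)^2) \<ge> 0"
    by (simp add: sum_nonneg)
  ultimately have "(\<Sum>j\<in>{..<length v} - {i}. (f j)^2) = 0"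
    using squares by linarith
  then have others: "f j = 0" if "j < length v" "j \<noteq> i" for j
    using that by (simp add: sum_nonneg_eq_0_iff)
  have "sum_list u - sum_list v = (\<Sum>j<length v. f j)"
    using len by (simp add: f_def sum_list_sum_nth atLeast0LessThan sum_subtractf)
  also have "\<dots> = f i"
    using i(1) others by (simp add: sum.remove)
  finally have "u ! i = v ! i - c"
    using sum by (simp add: f_def)
  with len others i(1) have "u = v[i := v ! i - c]"
    by (intro nth_equalityI) (auto simp: f_def nth_list_update)
  with i(1) show ?thesis by blast
qed

definition predecessors :: "nat \<Rightarrow> letter \<Rightarrow> int list \<Rightarrow> int list set" where
  "predecessors d s v = {u. inW d u \<and> inW d v \<and> adjW u v \<and> rankW d v = rankW d u + letter_step s}"

lemma predecessors_eq:
  assumes "inW d v"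
  shows "predecessors d s v
    = (\<lambda>i. v[i := v ! i - letter_step s]) ` {i. i < d \<and> inW d (v[i := v ! i - letter_step s])}"
proof -
  have len: "length v = d"
    using assms by (simp add: inW_def)
  have "u \<in> predecessors d s v \<longleftrightarrow> (\<exists>i<d. u = v[i := v ! i - letter_step s] \<and> inW d u)" for u
  proof
    assume "u \<in> predecessors d s v"
    then show "\<exists>i<d. u = v[i := v ! i - letter_step s] \<and> inW d u"
      using adjW_imp_list_update[of u v "letter_step s"] len
      by (auto simp: predecessors_def inW_def rankW_def)
  next
    assume "\<exists>i<d. u = v[i := v ! i - letter_step s] \<and> inW d u"
    then show "u \<in> predecessors d s v"
      using assms len adjW_list_update[OF _ abs_letter_step] sum_list_list_update[of _ v]
      by (auto simp: predecessors_def rankW_def)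
  qed
  then show ?thesis by auto
qed

lemma finite_predecessors: "finite (predecessors d s v)"
  by (cases "inW d v") (simp_all add: predecessors_eq, simp add: predecessors_def)

lemma append_mem_walksW_Cons_iff:
  "ps @ [v] \<in> walksW d (s # w) mu nu
    \<longleftrightarrow> v = nu \<and> ps \<in> walksW d w mu (last ps) \<and> last ps \<in> predecessors d s nu"
proof (cases "length ps = Suc (length w)")
  case True
  define m where "m = length w"
  let ?ps = "ps @ [v]"
  let ?step = "\<lambda>x j. if x ! (length x - 1 - j) = R then 1 else - 1 :: int"
  define P where "P j \<longleftrightarrow> adjW (?ps ! j) (?ps ! Suc j)
    \<and> rankW d (?ps ! Suc j) = rankW d (?ps ! j) + ?step (s # w) j" for j
  define Q where "Q j \<longleftrightarrow> adjW (ps ! j) (ps ! Suc j)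
    \<and> rankW d (ps ! Suc j) = rankW d (ps ! j) + ?step w j" for j
  have nth: "?ps ! j = ps ! j" if "j \<le> m" for j
    using that True by (simp add: nth_append m_def)
  have last_nth: "?ps ! Suc m = v" "last ps = ps ! m"
    using True last_conv_nth[of ps] by (force simp: nth_append m_def)+
  have "P j \<longleftrightarrow> Q j" if "j < m" for j
    using that by (simp add: P_def Q_def nth m_def nth_Cons')
  moreover have "?step (s # w) m = letter_step s"
    by (simp add: m_def letter_step_def)
  then have "P m \<longleftrightarrow> adjW (ps ! m) v \<and> rankW d v = rankW d (ps ! m) + letter_step s"
    unfolding P_def by (simp only: nth[of m] last_nth le_refl)
  ultimately have steps: "(\<forall>j<Suc m. P j)
      \<longleftrightarrow> (\<forall>j<m. Q j) \<and> adjW (ps ! m) v \<and> rankW d v = rankW d (ps ! m) + letter_step s"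
    by (auto simp: less_Suc_eq)
  have vertices: "(\<forall>j\<le>Suc m. inW d (?ps ! j)) \<longleftrightarrow> (\<forall>j\<le>m. inW d (ps ! j)) \<and> inW d v"
    by (auto simp: le_Suc_eq nth last_nth)
  have "?ps \<in> walksW d (s # w) mu nu
      \<longleftrightarrow> ps ! 0 = mu \<and> v = nu \<and> (\<forall>j\<le>Suc m. inW d (?ps ! j)) \<and> (\<forall>j<Suc m. P j)"
    using True nth[of 0] last_nth by (simp add: walksW_def P_def m_def)
  moreover have "ps \<in> walksW d w mu (last ps)
      \<longleftrightarrow> ps ! 0 = mu \<and> (\<forall>j\<le>m. inW d (ps ! j)) \<and> (\<forall>j<m. Q j)"
    using True last_nth by (simp add: walksW_def Q_def m_def)
  ultimately show ?thesis
    using steps vertices last_nth by (auto simp: predecessors_def)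
qed (auto simp: walksW_def)

lemma walksW_Nil: "walksW d [] mu nu = (if nu = mu \<and> inW d mu then {[mu]} else {})"
  by (auto simp: walksW_def length_Suc_conv)

lemma walksW_Cons:
  "walksW d (s # w) mu nu = (\<lambda>ps. ps @ [nu]) ` (\<Union>u\<in>predecessors d s nu. walksW d w mu u)"
proof (rule Set.set_eqI, rule iffI)
  fix ps' assume ps': "ps' \<in> walksW d (s # w) mu nu"
  then obtain ps v where "ps' = ps @ [v]"
    by (cases ps' rule: rev_cases) (auto simp: walksW_def)
  with ps' show "ps' \<in> (\<lambda>ps. ps @ [nu]) ` (\<Union>u\<in>predecessors d s nu. walksW d w mu u)"
    by (auto simp: append_mem_walksW_Cons_iff)
next
  fix ps' assume "ps' \<in> (\<lambda>ps. ps @ [nu]) ` (\<Union>u\<in>predecessors d s nu. walksW d w mu u)"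
  then obtain u ps where "ps' = ps @ [nu]" "u \<in> predecessors d s nu" "ps \<in> walksW d w mu u"
    by blast
  moreover from \<open>ps \<in> walksW d w mu u\<close> have "last ps = u"
    by (cases ps rule: rev_cases) (auto simp: walksW_def nth_append)
  ultimately show "ps' \<in> walksW d (s # w) mu nu"
    by (simp add: append_mem_walksW_Cons_iff)
qed

lemma finite_walksW: "finite (walksW d w mu nu)"
  by (induction w arbitrary: nu) (simp_all add: walksW_Nil walksW_Cons finite_predecessors)

lemma Z_Nil: "inW d mu \<Longrightarrow> Z d [] mu nu = (if nu = mu then 1 else 0)"
  by (simp add: Z_def walksW_Nil)

lemma Z_Cons: "Z d (s # w) mu nu = (\<Sum>u\<in>predecessors d s nu. Z d w mu u)"
proof -
  have "Z d (s # w) mu nu = card (\<Union>u\<in>predecessors d s nu. walksW d w mu u)"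
    unfolding Z_def walksW_Cons by (rule card_image) (simp add: inj_on_def)
  also have "\<dots> = (\<Sum>u\<in>predecessors d s nu. Z d w mu u)"
  proof -
    have "walksW d w mu u \<inter> walksW d w mu u' = {}" if "u \<noteq> u'" for u u'
      using that by (auto simp: walksW_def)
    then show ?thesis
      unfolding Z_def by (intro card_UN_disjoint) (auto simp: finite_predecessors finite_walksW)
  qed
  finally show ?thesis .
qed

lemma Z_Cons_eq_sum_updates:
  assumes "inW d nu"
  shows "Z d (s # w) mu nu = (\<Sum>i | i < d \<and> inW d (nu[i := nu ! i - letter_step s]).
    Z d w mu (nu[i := nu ! i - letter_step s]))"
proof -
  have "inj_on (\<lambda>i. nu[i := nu ! i - letter_step s]) {..<d}"
  proof (rule inj_onI)
    fix i j assume "i \<in> {..<d}" "j \<in> {..<d}"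
      and eq: "nu[i := nu ! i - letter_step s] = nu[j := nu ! j - letter_step s]"
    then have "i < length nu" "j < length nu"
      using assms by (auto simp: inW_def)
    show "i = j"
    proof (rule ccontr)
      assume "i \<noteq> j"
      with eq \<open>i < length nu\<close> have "nu ! i - letter_step s = nu ! i"
        by (metis nth_list_update_eq nth_list_update_neq)
      then show False
        using abs_letter_step[of s] by simp
    qed
  qed
  then have "inj_on (\<lambda>i. nu[i := nu ! i - letter_step s])
      {i. i < d \<and> inW d (nu[i := nu ! i - letter_step s])}"
    by (rule inj_on_subset) auto
  then show ?thesis
    by (simp add: Z_Cons predecessors_eq[OF assms] sum.reindex)
qed

subsection \<open>The reflection principle\<close>

definition signed_walks :: "nat \<Rightarrow> letter list \<Rightarrow> int list \<Rightarrow> int list \<Rightarrow> int" where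
  "signed_walks d w mu nu =
    (\<Sum>p | p permutes {..<d}. sign p * int (word_walks d w (\<lambda>i. nu ! i - mu ! p i)))"

lemma signed_walks_eq_0_if_repeated:
  assumes "a < d" "b < d" "a \<noteq> b" and "nu ! a = nu ! b"
  shows "signed_walks d w mu nu = 0"
proof -
  let ?t = "Transposition.transpose a b"
  let ?f = "\<lambda>p. sign p * int (word_walks d w (\<lambda>i. nu ! i - mu ! p i))"
  have t: "?t permutes {..<d}"
    using assms by (intro permutes_swap_id) auto
  have "signed_walks d w mu nu = (\<Sum>p | p permutes {..<d}. ?f (p \<circ> ?t))"
    unfolding signed_walks_def by (rule sum_permutations_compose_right[OF t])
  also have "\<dots> = (\<Sum>p | p permutes {..<d}. - ?f p)"
  proof (rule sum.cong[OF refl])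
    fix p assume "p \<in> {p. p permutes {..<d}}"
    then have "permutation p" "permutation ?t"
      using t permutes_imp_permutation[OF finite_lessThan] by auto
    then have "sign (p \<circ> ?t) = - sign p"
      using assms(3) by (simp add: sign_compose sign_swap_id)
    moreover have "(\<lambda>i. nu ! i - mu ! (p \<circ> ?t) i) = (\<lambda>i. nu ! i - mu ! p i) \<circ> ?t"
      using assms(4) by (auto simp: fun_eq_iff transpose_def)
    ultimately show "?f (p \<circ> ?t) = - ?f p"
      by (simp add: word_walks_permute_coordinates[OF t])
  qed
  also have "\<dots> = - signed_walks d w mu nu"
    by (simp add: signed_walks_def sum_negf)
  finally show ?thesis by simp
qed

lemma inW_permuted_eq:
  assumes mu: "inW d mu" and nu: "inW d nu" and p: "p permutes {..<d}"
    and eq: "\<forall>i<d. nu ! i = mu ! p i"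
  shows "p = id \<and> nu = mu"
proof -
  have len: "length mu = d" "length nu = d"
    using mu nu by (simp_all add: inW_def)
  have "nu = permute_list p mu"
    using p eq len by (intro nth_equalityI) (simp_all add: permute_list_nth)
  then have "mset nu = mset mu"
    using p len by simp
  moreover have "sorted_wrt (<) (rev mu)" "sorted_wrt (<) (rev nu)"
    using mu nu by (simp_all add: inW_def sorted_wrt_rev)
  then have "sorted (rev mu)" "distinct (rev mu)" "sorted (rev nu)" "distinct (rev nu)"
    by (simp_all add: strict_sorted_iff)
  moreover have "set (rev nu) = set (rev mu)"
    using mset_eq_setD[OF \<open>mset nu = mset mu\<close>] by simp
  ultimately have "rev nu = rev mu"
    by (intro sorted_distinct_set_unique)
  then have "nu = mu" by simp
  have "p i = i" for i
  proof (cases "i < d")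
    case True
    then have "p i < d"
      using p by (metis lessThan_iff permutes_in_image)
    moreover have "mu ! p i = mu ! i"
      using True eq \<open>nu = mu\<close> by simp
    ultimately show ?thesis
      using True \<open>distinct (rev mu)\<close> len by (simp add: nth_eq_iff_index_eq)
  qed (simp add: permutes_not_in[OF p])
  with \<open>nu = mu\<close> show ?thesis
    by auto
qed

lemma signed_walks_Nil:
  assumes "inW d mu" and "inW d nu"
  shows "signed_walks d [] mu nu = (if nu = mu then 1 else 0)"
proof -
  have "sign p * int (word_walks d [] (\<lambda>i. nu ! i - mu ! p i)) = (if p = id \<and> nu = mu then 1 else 0)"
    if "p permutes {..<d}" for p
    using inW_permuted_eq[OF assms that] by auto
  then have "signed_walks d [] mu nu = (\<Sum>p | p permutes {..<d}. if p = id \<and> nu = mu then 1 else 0)"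
    unfolding signed_walks_def by (intro sum.cong) auto
  then show ?thesis
    by (simp add: finite_permutations)
qed

lemma signed_walks_Cons:
  assumes "length nu = d"
  shows "signed_walks d (s # w) mu nu = (\<Sum>i<d. signed_walks d w mu (nu[i := nu ! i - letter_step s]))"
proof -
  have "(\<lambda>j. nu ! j - mu ! p j)(i := nu ! i - mu ! p i - letter_step s)
      = (\<lambda>j. nu[i := nu ! i - letter_step s] ! j - mu ! p j)" if "i < d" for i p
    using that assms by (auto simp: fun_eq_iff nth_list_update)
  then have "signed_walks d (s # w) mu nu
      = (\<Sum>p | p permutes {..<d}. \<Sum>i<d.
          sign p * int (word_walks d w (\<lambda>j. nu[i := nu ! i - letter_step s] ! j - mu ! p j)))"
    unfolding signed_walks_def by (simp add: sum_distrib_left)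
  then show ?thesis
    unfolding signed_walks_def by (simp only: sum.swap[where A="{..<d}"])
qed

lemma list_update_not_inW_imp_repeated:
  assumes nu: "inW d nu" and i: "i < d" and c: "\<bar>c\<bar> = 1" and not_inW: "\<not> inW d (nu[i := nu ! i - c])"
  shows "\<exists>a<d. \<exists>b<d. a \<noteq> b \<and> nu[i := nu ! i - c] ! a = nu[i := nu ! i - c] ! b"
proof -
  let ?nu = "nu[i := nu ! i - c]"
  have len: "length nu = d"
    using nu by (simp add: inW_def)
  from not_inW len obtain a b where ab: "a < b" "b < d" "\<not> ?nu ! b < ?nu ! a"
    by (auto simp: inW_def sorted_wrt_iff_nth_less)
  moreover have "nu ! b < nu ! a"
    using nu ab by (simp add: inW_def sorted_wrt_iff_nth_less)
  moreover have "?nu ! j = nu ! j - (if j = i then c else 0)" if "j < d" for j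
    using that len i by (simp add: nth_list_update)
  moreover have "c = 1 \<or> c = -1"
    using c by linarith
  ultimately have "?nu ! a = ?nu ! b"
    using ab by (cases "a = i"; cases "b = i") auto
  with ab show ?thesis
    by (metis less_trans less_irrefl)
qed

theorem Z_eq_signed_walks:
  assumes "inW d mu" and "inW d nu"
  shows "int (Z d w mu nu) = signed_walks d w mu nu"
  using assms(2)
proof (induction w arbitrary: nu)
  case Nil
  then show ?case
    using assms(1) by (simp add: Z_Nil signed_walks_Nil)
next
  case (Cons s w)
  let ?nu = "\<lambda>i. nu[i := nu ! i - letter_step s]"
  have "int (Z d (s # w) mu nu) = (\<Sum>i | i < d \<and> inW d (?nu i). signed_walks d w mu (?nu i))"
    using Cons by (simp add: Z_Cons_eq_sum_updates)
  also have "\<dots> = (\<Sum>i<d. signed_walks d w mu (?nu i))"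
  proof (rule sum.mono_neutral_left)
    show "\<forall>i\<in>{..<d} - {i. i < d \<and> inW d (?nu i)}. signed_walks d w mu (?nu i) = 0"
    proof
      fix i assume "i \<in> {..<d} - {i. i < d \<and> inW d (?nu i)}"
      then obtain a b where "a < d" "b < d" "a \<noteq> b" "?nu i ! a = ?nu i ! b"
        using list_update_not_inW_imp_repeated[OF Cons.prems _ abs_letter_step] by blast
      then show "signed_walks d w mu (?nu i) = 0"
        by (rule signed_walks_eq_0_if_repeated)
    qed
  qed auto
  also have "\<dots> = signed_walks d (s # w) mu nu"
    using Cons.prems by (simp add: signed_walks_Cons inW_def)
  finally show ?case .
qed

lemma sum_displacement_permuted:
  fixes la mu :: "'a::ab_group_add list"
  assumes "length la = d" "length mu = d" "p permutes {..<d}"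
  shows "(\<Sum>i<d. la ! i - mu ! p i) = sum_list la - sum_list mu"
proof -
  have "(\<Sum>i<d. la ! i - mu ! p i) = (\<Sum>i<d. la ! i) - (\<Sum>i<d. mu ! p i)"
    by (rule sum_subtractf)
  also have "(\<Sum>i<d. mu ! p i) = (\<Sum>i<d. mu ! i)"
    using sum.permute[OF assms(3), of "\<lambda>i. mu ! i"] by (simp add: o_def)
  finally show ?thesis
    using assms(1,2) by (simp add: sum_list_sum_nth atLeast0LessThan)
qed

lemma signed_walk_egf_nth:
  assumes mu: "inW d mu" and la: "inW d la"
    and W: "int (count_list W R) - int (count_list W L) = sum_list la - sum_list mu"
  shows "(\<Sum>p | p permutes {..<d}. of_int (sign p) * walk_egf d (\<lambda>i. la ! i - mu ! p i) $ length W)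
    = Z d W mu la / (fact (count_list W L) * fact (count_list W R))"
proof -
  have len: "length la = d" "length mu = d"
    using mu la by (simp_all add: inW_def)
  have "walk_egf d (\<lambda>i. la ! i - mu ! p i) $ length W
      = word_walks d W (\<lambda>i. la ! i - mu ! p i) / (fact (count_list W L) * fact (count_list W R))"
    if "p permutes {..<d}" for p
    using W sum_displacement_permuted[OF len that] by (intro walk_egf_nth_word) simp
  then have "(\<Sum>p | p permutes {..<d}. of_int (sign p) * walk_egf d (\<lambda>i. la ! i - mu ! p i) $ length W)
      = of_int (signed_walks d W mu la) / (fact (count_list W L) * fact (count_list W R))"
    by (simp add: signed_walks_def sum_divide_distrib)
  also have "\<dots> = Z d W mu la / (fact (count_list W L) * fact (count_list W R))"
    by (simp flip: Z_eq_signed_walks[OF mu la])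
  finally show ?thesis .
qed

lemma det_bessel_sums:
  "(\<lambda>N. \<Sum>p | p permutes {..<d}. of_int (sign p) * (walk_egf d (\<lambda>i. la ! i - mu ! p i) $ N * x ^ N))
    sums det (mat d d (\<lambda>(i, j). besselI (la ! i - mu ! j) (2 * x)))"
proof -
  have "det (mat d d (\<lambda>(i, j). besselI (la ! i - mu ! j) (2 * x)))
      = (\<Sum>p | p permutes {..<d}. of_int (sign p) * (\<Prod>i<d. besselI (la ! i - mu ! p i) (2 * x)))"
    unfolding det_def'[OF mat_carrier] atLeast0LessThan
    by (intro sum.cong prod.cong refl arg_cong2[where f="(*)"])
      (auto simp: permutes_in_image[of _ "{..<d}", simplified])
  then show ?thesis
    by (simp only:) (intro sums_sum sums_mult walk_egf_sums)
qed

theorem proposition4: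
  fixes d :: nat and mu la :: "int list" and W :: "nat \<Rightarrow> letter list" and x :: real
  assumes "d \<ge> 1"
    and "inW d mu" and "inW d la"
    and "rankW d mu \<le> rankW d la"
    and "\<And>n. count_list (W n) L = n"
    and "\<And>n. count_list (W n) R = n + nat (rankW d la - rankW d mu)"
  shows "(\<lambda>n. real (Z d (W n) mu la) * x ^ (2*n + nat (rankW d la - rankW d mu))
              / (fact n * fact (n + nat (rankW d la - rankW d mu))))
         sums det (mat d d (\<lambda>(i, j). besselI (la ! i - mu ! j) (2 * x)))"
proof -
  \<comment> \<open>The argument also covers \<open>d = 0\<close>.\<close>
  define k where "k = nat (rankW d la - rankW d mu)"
  let ?a = "\<lambda>N. \<Sum>p | p permutes {..<d}.
    of_int (sign p) * (walk_egf d (\<lambda>i. la ! i - mu ! p i) $ N * x ^ N)"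
  have k: "sum_list la - sum_list mu = int k"
    using assms(4) by (simp add: k_def rankW_def)
  have len: "length la = d" "length mu = d"
    using assms(2,3) by (simp_all add: inW_def)
  have "?a N = 0" if "N \<notin> range (\<lambda>n. 2 * n + k)" for N
    using that k sum_displacement_permuted[OF len]
    by (intro sum.neutral ballI) (simp add: walk_egf_nth_eq_0)
  then have "(\<lambda>n. ?a (2 * n + k)) sums det (mat d d (\<lambda>(i, j). besselI (la ! i - mu ! j) (2 * x)))"
    using det_bessel_sums sums_mono_reindex[of "\<lambda>n. 2 * n + k" ?a] by (simp add: strict_mono_def)
  moreover have "?a (2 * n + k) = Z d (W n) mu la * x ^ (2 * n + k) / (fact n * fact (n + k))" for n
  proof -
    have "length (W n) = 2 * n + k"
      using count_list_L_plus_R[of "W n"] assms(5,6) by (simp add: k_def)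
    moreover have "int (count_list (W n) R) - int (count_list (W n) L) = sum_list la - sum_list mu"
      using assms(5,6) k by (simp add: k_def)
    ultimately have "(\<Sum>p | p permutes {..<d}.
          of_int (sign p) * walk_egf d (\<lambda>i. la ! i - mu ! p i) $ (2 * n + k))
        = Z d (W n) mu la / (fact n * fact (n + k))"
      using signed_walk_egf_nth[OF assms(2,3), of "W n"] assms(5,6) by (simp add: k_def)
    moreover have "?a (2 * n + k) = (\<Sum>p | p permutes {..<d}.
        of_int (sign p) * walk_egf d (\<lambda>i. la ! i - mu ! p i) $ (2 * n + k)) * x ^ (2 * n + k)"
      by (simp add: sum_distrib_right mult.assoc)
    ultimately show ?thesis
      by simp
  qed
  ultimately show ?thesis
    by (simp add: k_def)
qed

end
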